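(* Let $\phi,\psi$ be seeds with $parent(\psi)=\phi$ and let $i\in\{1,\dots,n-3\}$. Then $\psi=son(\phi,i)$ if and only if $ord(\psi)=i$.
   Context: Fix an integer $n\ge 5$. An $n$-permutation is a sequence $(a_1,\dots,a_n)$ of the distinct elements of $\{1,\dots,n\}$. For $\pi=(a_1,\dots,a_n)$ put $\sigma(\pi)=(a_2,\dots,a_n,a_1)$; $\sigma^i$ is $\sigma$ applied $i$ times. On $\{1,\dots,n-1\}$ let $a\oplus 1=a+1$ for $a<n-1$ and $(n-1)\oplus 1=1$. A seed is an $(n-1)$-tuple $\psi=(a_1,\dots,a_{n-1})$ of distinct elements of $\{1,\dots,n\}$ with $a_1=n$ and $a_2\oplus1\notin\{a_1,\dots,a_{n-1}\}$; its missing element is $mis(\psi)=a_2\oplus 1$. The package $perms(\psi)$ is the set of all $n$-permutations obtained from $\psi$ by inserting $mis(\psi)$ at any position and then applying any cyclic rotation. Seeds $\phi,\psi$ are neighbors if $perms(\phi)\cap perms(\psi)\neq\emptyset$. For a seed $\psi=(a_1,\dots,a_{n-1})$ with $x=mis(\psi)$: $height(\psi)$ is the largest $k\in\{1,\dots,n-2\}$ such that $a_i=a_{i+1}\oplus 1$ for all $2\le i\le k$; $\widetilde\psi=(a_1,x,a_2,\dots,a_{n-1})$; for $1\le i\le n-1$, $\psi^{(i)}=(x,c_1,\dots,c_{n-1})$ where $(c_1,\dots,c_{n-1})$ is $\psi$ cyclically rotated to the right by $i-1$ positions. For distinct neighboring seeds $\beta,\psi$ we write $parent(\beta)=\psi$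 if $height(\psi)>1$ and $mis(\psi)=mis(\beta)\oplus 1$; if moreover $\sigma^i(\psi^{(i)})=\widetilde\beta$ we write $son(\psi,i)=\beta$. For a seed $\psi$, $ord(\psi)$ is the position of the entry $mis(\psi)\oplus 1$ in $\psi$ counted from the right end (the last entry of $\psi$ has position $1$). *)

theory Defs
  imports Main
begin

text \<open>Permutations and seeds are represented as lists of naturals (1-based in the paper,
  0-based list indices here). The parameter n is the fixed integer of the paper.\<close>

definition oplus1 :: "nat \<Rightarrow> nat \<Rightarrow> nat" where
  "oplus1 n a = (if a < n - 1 then a + 1 else 1)"

definition is_perm :: "nat \<Rightarrow> nat list \<Rightarrow> bool" where
  "is_perm n p \<longleftrightarrow> length p = n \<and> distinct p \<and> set p = {1..n}"

definition sigma :: "nat list \<Rightarrow> nat list" where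
  "sigma p = rotate1 p"

definition mis :: "nat \<Rightarrow> nat list \<Rightarrow> nat" where
  "mis n psi = oplus1 n (psi ! 1)"

definition seed :: "nat \<Rightarrow> nat list \<Rightarrow> bool" where
  "seed n psi \<longleftrightarrow> length psi = n - 1 \<and> distinct psi \<and> set psi \<subseteq> {1..n}
     \<and> psi ! 0 = n \<and> mis n psi \<notin> set psi"

definition perms :: "nat \<Rightarrow> nat list \<Rightarrow> nat list set" where
  "perms n psi = {(sigma ^^ k) (take j psi @ [mis n psi] @ drop j psi) | j k. j \<le> length psi}"

definition neighbors :: "nat \<Rightarrow> nat list \<Rightarrow> nat list \<Rightarrow> bool" where
  "neighbors n phi psi \<longleftrightarrow> perms n phi \<inter> perms n psi \<noteq> {}"

text \<open>height: largest k in {1..n-2} with a_i = a_{i+1} (+) 1 for all 2 <= i <= k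
  (1-based a_i = psi ! (i-1)).\<close>
definition height :: "nat \<Rightarrow> nat list \<Rightarrow> nat" where
  "height n psi = Max {k \<in> {1..n-2}. \<forall>i. 2 \<le> i \<and> i \<le> k \<longrightarrow> psi ! (i - 1) = oplus1 n (psi ! i)}"

definition tilde :: "nat \<Rightarrow> nat list \<Rightarrow> nat list" where
  "tilde n psi = hd psi # mis n psi # tl psi"

definition rotr :: "nat \<Rightarrow> 'a list \<Rightarrow> 'a list" where
  "rotr m xs = rev (rotate m (rev xs))"

definition sup_i :: "nat \<Rightarrow> nat list \<Rightarrow> nat \<Rightarrow> nat list" where
  "sup_i n psi i = mis n psi # rotr (i - 1) psi"

text \<open>parent n beta psi  means  parent(beta) = psi.\<close>
definition parent :: "nat \<Rightarrow> nat list \<Rightarrow> nat list \<Rightarrow> bool" where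
  "parent n beta psi \<longleftrightarrow> seed n beta \<and> seed n psi \<and> beta \<noteq> psi \<and> neighbors n beta psi
     \<and> height n psi > 1 \<and> mis n psi = oplus1 n (mis n beta)"

text \<open>son n psi i beta  means  son(psi, i) = beta.\<close>
definition son :: "nat \<Rightarrow> nat list \<Rightarrow> nat \<Rightarrow> nat list \<Rightarrow> bool" where
  "son n psi i beta \<longleftrightarrow> parent n beta psi \<and> (sigma ^^ i) (sup_i n psi i) = tilde n beta"

text \<open>ord: position of mis(psi) (+) 1 in psi counted from the right (last entry = 1).\<close>
definition ord :: "nat \<Rightarrow> nat list \<Rightarrow> nat" where
  "ord n psi = (THE p. 1 \<le> p \<and> p \<le> length psi \<and> psi ! (length psi - p) = oplus1 n (mis n psi))"

end

theory Submission imports Defs begin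

text \<open>Write \<open>\<phi> = (n, a, D)\<close>. Since \<open>\<phi>\<close> and \<open>\<psi>\<close> share a permutation, rotating it so
  that \<open>n\<close> comes first exhibits one list both as the tail of \<open>\<phi>\<close> with \<open>x = mis \<phi>\<close>
  inserted and as the tail of \<open>\<psi>\<close> with \<open>mis \<psi>\<close> inserted. As \<open>mis \<psi> = a\<close>, deleting it
  shows that \<open>\<psi>\<close> is \<open>n\<close> followed by \<open>D\<close> with \<open>x\<close> inserted after its first \<open>m\<close> entries.
  Now \<open>\<sigma>^i(\<phi>^(i))\<close> is \<open>\<phi>\<close> with \<open>x\<close> inserted after \<open>|D| + 3 - i\<close> entries, whereas
  \<open>\<psi>\<close> with \<open>mis \<psi>\<close> inserted is \<open>\<phi>\<close> with \<open>x\<close> inserted after \<open>m + 2\<close> entries; and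
  \<open>x = mis \<psi> \<oplus> 1\<close> sits at position \<open>|D| + 1 - m\<close> from the right of \<open>\<psi>\<close>. So both
  conditions say \<open>m + i = |D| + 1\<close>.\<close>

lemma sigma_pow: "sigma ^^ k = rotate k"
  by (simp add: rotate_def sigma_def[abs_def])

lemma rotate_inverse: "\<exists>s. rotate s (rotate k xs) = xs"
proof (cases "xs = []")
  case False
  then have "(length xs - k mod length xs + k) mod length xs = 0"
    by (metis add.commute le_add_diff_inverse length_greater_0_conv mod_add_right_eq
        mod_less_divisor mod_self less_imp_le)
  then show ?thesis by (metis rotate_id rotate_rotate)
qed simp

lemma distinct_rotate_eq_self_if_hd:
  assumes "distinct xs" "hd (rotate k xs) = hd xs"
  shows "rotate k xs = xs"
proof (cases "xs = []")
  case False
  then have "xs ! (k mod length xs) = xs ! 0"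
    using assms(2) by (metis hd_conv_nth hd_rotate_conv_nth)
  then have "k mod length xs = 0"
    using assms(1) False by (simp add: nth_eq_iff_index_eq)
  then show ?thesis by simp
qed simp

lemma rotate_insert_to_head:
  assumes "j \<le> Suc (length u)"
  shows "\<exists>p t. rotate t (take j (c # u) @ x # drop j (c # u)) = c # take p u @ x # drop p u"
proof (cases j)
  case 0
  then have "rotate 1 (take j (c # u) @ x # drop j (c # u)) = c # take (length u) u @ x # drop (length u) u"
    by simp
  then show ?thesis by blast
next
  case (Suc p)
  then have "rotate 0 (take j (c # u) @ x # drop j (c # u)) = c # take p u @ x # drop p u"
    by simp
  then show ?thesis by blast
qed

lemma distinct_insert:
  assumes "distinct xs" "x \<notin> set xs"
  shows "distinct (take j xs @ x # drop j xs)"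
  using assms set_take_disj_set_drop_if_distinct[OF assms(1), of j j]
  by (auto simp: distinct_append dest: in_set_takeD in_set_dropD)

lemma rotate_eq_rotate_imp_rotate:
  assumes "rotate k xs = rotate l ys"
  shows "\<exists>r. xs = rotate r ys"
proof -
  obtain s where "rotate s (rotate k xs) = xs" using rotate_inverse by blast
  then have "xs = rotate (s + l) ys" by (simp add: assms rotate_rotate)
  then show ?thesis by blast
qed

lemma rotate_eq_same_hd:
  assumes "distinct ys" "rotate k xs = rotate l ys" "hd xs = hd ys"
  shows "xs = ys"
proof -
  obtain r where r: "xs = rotate r ys" using rotate_eq_rotate_imp_rotate[OF assms(2)] by blast
  then have "hd (rotate r ys) = hd ys" using assms(3) by simp
  with r show ?thesis using distinct_rotate_eq_self_if_hd[OF assms(1)] by simp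
qed

lemma rotated_insertions_eq:
  assumes "distinct (c # v)" "y \<notin> set (c # v)"
    and "j \<le> Suc (length u)" "j' \<le> Suc (length v)"
    and "rotate k (take j (c # u) @ x # drop j (c # u)) = rotate l (take j' (c # v) @ y # drop j' (c # v))"
  shows "\<exists>p q. take p u @ x # drop p u = take q v @ y # drop q v"
proof -
  obtain p t where t: "rotate t (take j (c # u) @ x # drop j (c # u)) = c # take p u @ x # drop p u"
    using rotate_insert_to_head[OF assms(3)] by blast
  obtain q t' where t': "rotate t' (take j' (c # v) @ y # drop j' (c # v)) = c # take q v @ y # drop q v"
    using rotate_insert_to_head[OF assms(4)] by blast
  have "rotate (t' + k) (c # take p u @ x # drop p u)
      = rotate (t' + t) (rotate k (take j (c # u) @ x # drop j (c # u)))"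
    unfolding t[symmetric] rotate_rotate by (simp add: ac_simps)
  also have "\<dots> = rotate (t + l) (c # take q v @ y # drop q v)"
    unfolding assms(5) t'[symmetric] rotate_rotate by (simp add: ac_simps)
  moreover have "distinct (c # take q v @ y # drop q v)"
    using distinct_insert[OF assms(1,2), of "Suc q"] by simp
  ultimately have "c # take p u @ x # drop p u = c # take q v @ y # drop q v"
    using rotate_eq_same_hd by (metis list.sel(1))
  then show ?thesis by blast
qed

lemma insert_after_head_eq:
  assumes "x \<noteq> y" "y \<notin> set D" "y \<notin> set T"
    and "take p (y # D) @ x # drop p (y # D) = take q T @ y # drop q T"
  shows "\<exists>m \<le> length D. T = take m D @ x # drop m D"
proof -
  have "removeAll y (take q T @ y # drop q T) = T"
    using assms(3) by (metis append_take_drop_id removeAll.simps(2) removeAll_append removeAll_id)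
  then have T: "T = removeAll y (take p (y # D) @ x # drop p (y # D))"
    using assms(4) by simp
  show ?thesis
  proof (cases p)
    case 0
    then have "T = take 0 D @ x # drop 0 D" using T assms(1,2) by simp
    then show ?thesis by blast
  next
    case (Suc m)
    have "y \<notin> set (take m D)" "y \<notin> set (drop m D)"
      using assms(2) by (auto dest: in_set_takeD in_set_dropD)
    then have "T = take m D @ x # drop m D"
      using T assms(1) Suc by (simp add: removeAll_id)
    then show ?thesis
      by (cases "m \<le> length D") (auto intro: exI[of _ "length D"])
  qed
qed

lemma insert_position_unique:
  assumes "x \<notin> set D" "m \<le> length D" "r \<le> length D"
    and "take m D @ x # drop m D = take r D @ x # drop r D"
  shows "m = r"
proof -
  have "\<not> k < k'" if "k \<le> length D" "k' \<le> length D"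
    and eq: "take k D @ x # drop k D = take k' D @ x # drop k' D" for k k'
  proof
    assume "k < k'"
    then have "(take k' D @ x # drop k' D) ! k = D ! k" using that(2) by (simp add: nth_append)
    moreover have "(take k D @ x # drop k D) ! k = x" using that(1) by (simp add: nth_append)
    ultimately have "x = D ! k" using eq by simp
    with \<open>k < k'\<close> that(2) assms(1) show False by simp
  qed
  then show ?thesis using assms(2-4) by (metis linorder_neqE_nat)
qed

lemma rotr_conv_drop_take:
  "k \<le> length xs \<Longrightarrow> rotr k xs = drop (length xs - k) xs @ take (length xs - k) xs"
  unfolding rotr_def by (cases "k = length xs") (simp_all add: rotate_drop_take take_rev drop_rev)

lemma rotate_cons_rotr:
  assumes "0 < i" "i \<le> Suc (length xs)"
  shows "rotate i (x # rotr (i - 1) xs) = take (Suc (length xs) - i) xs @ x # drop (Suc (length xs) - i) xs"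
proof -
  have "x # rotr (i - 1) xs = (x # drop (Suc (length xs) - i) xs) @ take (Suc (length xs) - i) xs"
    using assms by (simp add: rotr_conv_drop_take Suc_diff_le)
  moreover have "length (x # drop (Suc (length xs) - i) xs) = i" using assms by simp
  ultimately show ?thesis by (metis rotate_append)
qed

lemma position_from_right_unique:
  assumes "distinct xs" "k < length xs"
  shows "(THE p. 1 \<le> p \<and> p \<le> length xs \<and> xs ! (length xs - p) = xs ! k) = length xs - k"
proof (rule the_equality)
  fix p assume p: "1 \<le> p \<and> p \<le> length xs \<and> xs ! (length xs - p) = xs ! k"
  then have "length xs - p < length xs" by auto
  with p have "length xs - p = k" using nth_eq_iff_index_eq[OF assms(1)] assms(2) by blast
  then show "p = length xs - k" using p by linarith
qed (use assms in auto)

lemma oplus1_bounds: "2 \<le> n \<Longrightarrow> oplus1 n a \<in> {1..n - 1}"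
  by (auto simp: oplus1_def)

lemma oplus1_inj_on: "inj_on (oplus1 n) {1..n - 1}"
  unfolding inj_on_def oplus1_def by auto

lemma seed_nth_bounds:
  assumes "seed n psi" "0 < k" "k < length psi"
  shows "psi ! k \<in> {1..n - 1}"
proof -
  have "psi ! k \<in> set psi" using assms(3) by simp
  then have "psi ! k \<in> {1..n}" using assms(1) by (auto simp: seed_def)
  moreover have "psi ! k \<noteq> psi ! 0"
    using assms nth_eq_iff_index_eq[of psi k 0] by (simp add: seed_def)
  ultimately show ?thesis using assms(1) by (auto simp: seed_def)
qed

lemma mis_child_eq:
  assumes "parent n psi phi" "3 \<le> n"
  shows "mis n psi = phi ! 1"
proof (rule inj_onD[OF oplus1_inj_on])
  have phi: "seed n phi" using assms(1) by (simp add: parent_def)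
  then show "oplus1 n (mis n psi) = oplus1 n (phi ! 1)"
    using assms(1) by (simp add: parent_def mis_def)
  show "mis n psi \<in> {1..n - 1}"
    unfolding mis_def using assms(2) by (intro oplus1_bounds) simp
  show "phi ! 1 \<in> {1..n - 1}"
    using seed_nth_bounds[OF phi] phi assms(2) by (simp add: seed_def)
qed

lemma parent_insertion_form:
  assumes "parent n psi phi" "3 \<le> n" "phi = n # a # D"
  shows "\<exists>m \<le> length D. psi = n # take m D @ mis n phi # drop m D"
proof -
  have phi: "seed n phi" and psi: "seed n psi"
    using assms(1) by (auto simp: parent_def)
  obtain T where T: "psi = n # T"
    using psi assms(2) by (cases psi) (auto simp: seed_def)
  have y: "mis n psi = a" using mis_child_eq[OF assms(1,2)] assms(3) by simp
  obtain r where "r \<in> perms n phi" "r \<in> perms n psi"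
    using assms(1) by (auto simp: parent_def neighbors_def)
  then obtain j k j' l where j: "j \<le> Suc (length (a # D))" "j' \<le> Suc (length T)"
    and rot: "rotate k (take j (n # a # D) @ mis n phi # drop j (n # a # D))
       = rotate l (take j' (n # T) @ a # drop j' (n # T))"
    unfolding perms_def sigma_pow assms(3) T y[unfolded T] by auto
  have "distinct (n # T)" "a \<notin> set (n # T)"
    using psi T y by (auto simp: seed_def)
  from rotated_insertions_eq[OF this j rot] obtain p q
    where "take p (a # D) @ mis n phi # drop p (a # D) = take q T @ a # drop q T"
    by blast
  moreover have "mis n phi \<noteq> a" "a \<notin> set D"
    using phi assms(3) by (auto simp: seed_def)
  moreover have "a \<notin> set T" using psi T y by (auto simp: seed_def)
  ultimately obtain m where "m \<le> length D" "T = take m D @ mis n phi # drop m D"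
    using insert_after_head_eq[of "mis n phi" a D T p q] by blast
  then show ?thesis using T by blast
qed

lemma son_iff_insert_position:
  assumes "parent n psi phi" "phi = n # a # D" "psi = n # take m D @ mis n phi # drop m D"
    and "m \<le> length D" "mis n psi = a" "0 < i" "i \<le> Suc (length D)"
  shows "son n phi i psi \<longleftrightarrow> m = Suc (length D) - i"
proof -
  have "(sigma ^^ i) (sup_i n phi i)
      = take (Suc (length phi) - i) phi @ mis n phi # drop (Suc (length phi) - i) phi"
    using rotate_cons_rotr[of i phi] assms(2,6,7) by (simp add: sigma_pow sup_i_def)
  also have "\<dots> = n # a # take (Suc (length D) - i) D @ mis n phi # drop (Suc (length D) - i) D"
    using assms(2,7) by (simp add: Suc_diff_le)
  finally have sigma_sup: "(sigma ^^ i) (sup_i n phi i)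
      = n # a # take (Suc (length D) - i) D @ mis n phi # drop (Suc (length D) - i) D" .
  have "tilde n psi = n # a # take m D @ mis n phi # drop m D"
    using assms(3,5) by (simp add: tilde_def)
  with sigma_sup have "son n phi i psi \<longleftrightarrow>
      take (Suc (length D) - i) D @ mis n phi # drop (Suc (length D) - i) D
      = take m D @ mis n phi # drop m D"
    using assms(1) by (simp add: son_def)
  moreover have "mis n phi \<notin> set D"
    using assms(1,2) by (auto simp: parent_def seed_def)
  moreover have "Suc (length D) - i \<le> length D" using assms(6) by simp
  ultimately show ?thesis
    using insert_position_unique[of "mis n phi" D "Suc (length D) - i" m] assms(4) by blast
qed

lemma ord_insert_position:
  assumes "distinct psi" "psi = c # take m D @ x # drop m D" "m \<le> length D"
    and "oplus1 n (mis n psi) = x"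
  shows "ord n psi = Suc (length D) - m"
proof -
  have "psi ! Suc m = x" using assms(2,3) by (simp add: nth_append)
  moreover have "length psi = length D + 2" using assms(2) by simp
  ultimately show ?thesis
    using position_from_right_unique[OF assms(1), of "Suc m"] assms(3,4) by (simp add: ord_def)
qed

theorem mainTheorem4:
  fixes n i :: nat and phi psi :: "nat list"
  assumes "n \<ge> 5"
    and "seed n phi" and "seed n psi"
    and "parent n psi phi"
    and "1 \<le> i" and "i \<le> n - 3"
  shows "son n phi i psi \<longleftrightarrow> ord n psi = i"
proof -
  have "length phi = n - 1" "phi ! 0 = n" using assms(2) by (auto simp: seed_def)
  then obtain a D where phi: "phi = n # a # D" and len: "length D = n - 3"
    using assms(1) by (cases phi; cases "tl phi") auto
  obtain m where m: "m \<le> length D" and psi: "psi = n # take m D @ mis n phi # drop m D"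
    using parent_insertion_form[OF assms(4) _ phi] assms(1) by auto
  have "mis n psi = a" using mis_child_eq[OF assms(4)] assms(1) phi by simp
  then have son: "son n phi i psi \<longleftrightarrow> m = Suc (length D) - i"
    using son_iff_insert_position[OF assms(4) phi psi m] assms(5,6) len by simp
  have "ord n psi = Suc (length D) - m"
    using ord_insert_position[OF _ psi m] assms(3,4) by (simp add: seed_def parent_def)
  with son show ?thesis using m assms(5,6) len by linarith
qed

end
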